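(* Let $\rho_-\in[0,2]$ and define the measure $\mathrm{d}\rho=\rho_-\,\mathrm{d}x\llcorner[0,1]+(2-\rho_-)\,\mathrm{d}x\llcorner[1,2]$ on $[0,2]$. Let $T_{\rho_-}:[0,2]\to[0,2]$ be given, for $\rho_-\in(0,2)$, by \[T_{\rho_-}(x)=\begin{cases}\dfrac{x}{\rho_-} & x\le\rho_-,\\[2mm] 2-\dfrac{2-x}{2-\rho_-} & x>\rho_-,\end{cases}\] and by $T_0(0)=1$, $T_0(x)=1+\frac x2$ for $x>0$, and $T_2(x)=\frac x2$ for $x\le 2$. Then $\rho$ is the push-forward of Lebesgue measure on $[0,2]$ under $T_{\rho_-}$, i.e. $\mathrm{d}\rho=(T_{\rho_-})_\#\mathrm{d}x$, and \[\int_{[0,2]}(T_{\rho_-}(x)-x)^2\,\mathrm{d}x\lesssim(\rho_--1)^2,\] \[\int_{[0,2]}\Big(\tfrac12(T_{\rho_-}(x)-x)+\tfrac12(T_{2-\rho_-}(x)-x)\Big)^2\,\mathrm{d}x\lesssim(\rho_--1)^4.\]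
   Context: $A\lesssim B$ means $A\le CB$ for a finite universal constant $C$ (independent of $\rho_-$). $\mathrm{d}x\llcorner[a,b]$ denotes Lebesgue measure restricted to $[a,b]$, and $T_\#\mu(A)=\mu(T^{-1}(A))$ for Borel $A$. *)

theory Defs
  imports "HOL-Analysis.Analysis"
begin

definition Tmap :: "real \<Rightarrow> real \<Rightarrow> real" where
  "Tmap r x =
     (if r = 0 then (if x = 0 then 1 else 1 + x / 2)
      else if r = 2 then x / 2
      else if x \<le> r then x / r
      else 2 - (2 - x) / (2 - r))"

definition rho_meas :: "real \<Rightarrow> real measure" where
  "rho_meas r = density lborel
     (\<lambda>x. ennreal r * indicator {0..1} x + ennreal (2 - r) * indicator {1..2} x)"

end

theory Submission
  imports Defs
begin

text \<open>
  Both measures are finite, so they agree as soon as they agree on every upper tail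
  \<open>(a, \<infinity>)\<close>. The map \<open>T\<^sub>r\<close> is nondecreasing on \<open>[0, 2]\<close>, so the preimage of
  such a tail is a tail \<open>(c, 2]\<close> with an explicit threshold \<open>c\<close>, whose length is the
  \<open>\<rho>\<close>-mass of \<open>(a, \<infinity>)\<close>.

  For the estimates, \<open>T\<^sub>r\<close> moves every point of \<open>[0, 2]\<close> by at most \<open>|r - 1|\<close>, while
  \<open>T\<^sub>r\<close> and \<open>T\<^sub>2\<^sub>-\<^sub>r\<close> move points in opposite directions to first order in
  \<open>r - 1\<close>, so their mean displacement is pointwise \<open>O((r - 1)\<^sup>2)\<close>. Integrating the
  squared pointwise bounds over \<open>[0, 2]\<close> gives both estimates with constant 2.
\<close>

lemma Tmap_measurable [measurable]: "Tmap r \<in> borel_measurable borel"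
  unfolding Tmap_def by measurable

lemma emeasure_lborel_Icc_Int_greaterThan:
  fixes a lo hi :: real
  assumes "lo \<le> hi"
  shows "emeasure lborel ({lo..hi} \<inter> {a<..}) = ennreal (max 0 (hi - max lo a))"
proof -
  consider "a < lo" | "lo \<le> a" "a < hi" | "hi \<le> a" by force
  then show ?thesis
  proof cases
    case 1
    then have "{lo..hi} \<inter> {a<..} = {lo..hi}" by auto
    then show ?thesis using 1 assms by simp
  next
    case 2
    then have "{lo..hi} \<inter> {a<..} = {a<..hi}" by auto
    then show ?thesis using 2 by simp
  next
    case 3
    then have "{lo..hi} \<inter> {a<..} = {}" by auto
    then show ?thesis using 3 by simp
  qed
qed

lemma emeasure_rho_meas_greaterThan:
  assumes "r \<in> {0..2}"
  shows "emeasure (rho_meas r) {a<..}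
           = ennreal (r * max 0 (1 - max 0 a) + (2 - r) * max 0 (2 - max 1 a))"
proof -
  have "emeasure (rho_meas r) {a<..}
      = (\<integral>\<^sup>+ x. ennreal r * indicator ({0..1} \<inter> {a<..}) x
                + ennreal (2 - r) * indicator ({1..2} \<inter> {a<..}) x \<partial>lborel)"
    unfolding rho_meas_def
    by (subst emeasure_density) (auto intro!: nn_integral_cong split: split_indicator)
  also have "\<dots> = ennreal r * emeasure lborel ({0..1} \<inter> {a<..})
                  + ennreal (2 - r) * emeasure lborel ({1..2} \<inter> {a<..})"
    by (subst nn_integral_add) (auto simp: nn_integral_cmult_indicator)
  also have "\<dots> = ennreal (r * max 0 (1 - max 0 a) + (2 - r) * max 0 (2 - max 1 a))"
    using assms
    by (simp add: emeasure_lborel_Icc_Int_greaterThan ennreal_mult[symmetric] ennreal_plus)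
  finally show ?thesis .
qed

text \<open>The inverse of the affine branches of \<open>Tmap r\<close>, extended to all of \<open>\<real>\<close>.\<close>

definition Tmap_threshold :: "real \<Rightarrow> real \<Rightarrow> real" where
  "Tmap_threshold r a =
     (if r = 0 then 2 * (a - 1)
      else if r = 2 then 2 * a
      else if a \<le> 1 then r * a
      else 2 - (2 - a) * (2 - r))"

lemma Tmap_greater_iff:
  assumes "r \<in> {0..2}" "x \<in> {0..2}"
  shows "a < Tmap r x \<longleftrightarrow> Tmap_threshold r a < x"
proof -
  consider "r = 0" | "r = 2" | "0 < r" "r < 2" using assms(1) by force
  then show ?thesis
  proof cases
    case r: 3
    have left_iff: "a < x / r \<longleftrightarrow> r * a < x" using r by (simp add: pos_less_divide_eq mult.commute)
    have right_iff: "a < 2 - (2 - x) / (2 - r) \<longleftrightarrow> 2 - (2 - a) * (2 - r) < x"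
    proof -
      have "(2 - x) / (2 - r) < 2 - a \<longleftrightarrow> 2 - x < (2 - a) * (2 - r)"
        using r by (simp add: pos_divide_less_eq)
      then show ?thesis by linarith
    qed
    consider "x \<le> r" "a \<le> 1" | "x \<le> r" "1 < a" | "r < x" "a \<le> 1" | "r < x" "1 < a" by linarith
    then show ?thesis
    proof cases
      case 1
      then show ?thesis using r left_iff by (simp add: Tmap_def Tmap_threshold_def)
    next
      case 2
      have "(2 - a) * (2 - r) < 2 - r" using 2 r by (simp add: mult_less_cancel_right2)
      moreover have "x / r \<le> 1" using 2 r by simp
      ultimately have "\<not> a < x / r" "\<not> 2 - (2 - a) * (2 - r) < x" using 2 by linarith+
      then show ?thesis using 2 r by (simp add: Tmap_def Tmap_threshold_def)
    next
      case 3
      have "r * a \<le> r" using 3 r by (simp add: mult_left_le)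
      moreover have "(2 - x) / (2 - r) < 1" using 3 r by simp
      ultimately have "a < 2 - (2 - x) / (2 - r)" "r * a < x" using 3 by linarith+
      then show ?thesis using 3 r by (simp add: Tmap_def Tmap_threshold_def)
    next
      case 4
      then show ?thesis using r right_iff by (simp add: Tmap_def Tmap_threshold_def)
    qed
  qed (use assms in \<open>auto simp: Tmap_def Tmap_threshold_def\<close>)
qed

lemma Tmap_threshold_tail:
  assumes "r \<in> {0..2}"
  shows "max 0 (2 - max 0 (Tmap_threshold r a))
           = r * max 0 (1 - max 0 a) + (2 - r) * max 0 (2 - max 1 a)"
proof -
  consider "a < 0" | "0 \<le> a" "a \<le> 1" | "1 < a" "a < 2" | "2 \<le> a" by linarith
  then show ?thesis
  proof cases
    case 1
    then have "Tmap_threshold r a \<le> 0"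
      using assms by (auto simp: Tmap_threshold_def mult_nonneg_nonpos)
    then show ?thesis using 1 by simp
  next
    case 2
    have "r * a \<le> r" using 2 assms by (simp add: mult_left_le)
    moreover have "max 0 (Tmap_threshold r a) = r * a"
      using 2 assms by (auto simp: Tmap_threshold_def)
    ultimately show ?thesis using 2 assms by (simp add: algebra_simps)
  next
    case 3
    have "(2 - a) * (2 - r) \<le> 2" using 3 assms mult_mono[of "2 - a" 1 "2 - r" 2] by simp
    then have "max 0 (2 - max 0 (Tmap_threshold r a)) = (2 - a) * (2 - r)"
      using 3 assms by (auto simp: Tmap_threshold_def)
    then show ?thesis using 3 by (simp add: mult.commute)
  next
    case 4
    then have "2 \<le> Tmap_threshold r a"
      using assms by (auto simp: Tmap_threshold_def mult_nonpos_nonneg)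
    then show ?thesis using 4 by simp
  qed
qed

lemma emeasure_distr_Tmap_greaterThan:
  assumes "r \<in> {0..2}"
  shows "emeasure (distr (restrict_space lborel {0..2}) lborel (Tmap r)) {a<..}
           = ennreal (max 0 (2 - max 0 (Tmap_threshold r a)))"
proof -
  have "Tmap r -` {a<..} \<inter> {0..2} = {0..2} \<inter> {Tmap_threshold r a<..}"
    using Tmap_greater_iff[OF assms] by auto
  then show ?thesis
    by (simp add: emeasure_distr measurable_restrict_space1 emeasure_restrict_space
                  emeasure_lborel_Icc_Int_greaterThan)
qed

lemma rho_meas_eq_distr_Tmap:
  assumes "r \<in> {0..2}"
  shows "rho_meas r = distr (restrict_space lborel {0..2}) lborel (Tmap r)"
proof (rule sym, rule measure_eqI_lessThan)
  fix a :: real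
  show "emeasure (distr (restrict_space lborel {0..2}) lborel (Tmap r)) {a<..} < \<infinity>"
    using emeasure_distr_Tmap_greaterThan[OF assms] by simp
  show "emeasure (distr (restrict_space lborel {0..2}) lborel (Tmap r)) {a<..}
          = emeasure (rho_meas r) {a<..}"
    using assms by (simp add: emeasure_distr_Tmap_greaterThan emeasure_rho_meas_greaterThan
                              Tmap_threshold_tail)
qed (simp_all add: rho_meas_def)

lemma set_integral_Icc_le_const:
  fixes f :: "real \<Rightarrow> real"
  assumes "a \<le> b" "0 \<le> K" "\<And>x. x \<in> {a..b} \<Longrightarrow> f x \<le> K"
  shows "(\<integral>x\<in>{a..b}. f x \<partial>lborel) \<le> (b - a) * K"
proof -
  have "set_integrable lborel {a..b} (\<lambda>_. K)"
    by (intro borel_integrable_atLeastAtMost' continuous_on_const)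
  then have "(\<integral>x\<in>{a..b}. f x \<partial>lborel) \<le> (\<integral>x\<in>{a..b}. K \<partial>lborel)"
    unfolding set_lebesgue_integral_def set_integrable_def
    using assms by (intro integral_mono') (auto split: split_indicator)
  also have "\<dots> = (b - a) * K"
    using assms(1) by (simp add: set_integral_const)
  finally show ?thesis .
qed

lemma abs_Tmap_minus_le:
  assumes r: "r \<in> {0..2}" and x: "x \<in> {0..2}"
  shows "\<bar>Tmap r x - x\<bar> \<le> \<bar>r - 1\<bar>"
proof -
  have scaled: "\<bar>(1 - r) * q\<bar> \<le> \<bar>r - 1\<bar>" if "\<bar>q\<bar> \<le> 1" for q
    using that by (simp add: abs_mult abs_minus_commute mult_left_le)
  consider "r = 0" | "r = 2" | "0 < r" "r < 2" "x \<le> r" | "0 < r" "r < 2" "r < x"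
    using r by force
  then show ?thesis
  proof cases
    case 3
    have "Tmap r x - x = (1 - r) * (x / r)" using 3 by (auto simp: Tmap_def field_simps)
    moreover have "\<bar>x / r\<bar> \<le> 1" using 3 x by simp
    ultimately show ?thesis using scaled by metis
  next
    case 4
    have "Tmap r x - x = (1 - r) * ((2 - x) / (2 - r))" using 4 by (auto simp: Tmap_def field_simps)
    moreover have "\<bar>(2 - x) / (2 - r)\<bar> \<le> 1" using 4 x by simp
    ultimately show ?thesis using scaled by metis
  qed (use x in \<open>auto simp: Tmap_def\<close>)
qed

definition mean_displacement :: "real \<Rightarrow> real \<Rightarrow> real" where
  "mean_displacement r x = (1/2) * (Tmap r x - x) + (1/2) * (Tmap (2 - r) x - x)"

lemma mean_displacement_reflect: "mean_displacement (2 - r) x = mean_displacement r x"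
  by (simp add: mean_displacement_def)

lemma abs_mean_displacement_le_of_ge_1:
  assumes r: "1 \<le> r" "r \<le> 2" and x: "x \<in> {0..2}"
  shows "\<bar>mean_displacement r x\<bar> \<le> (r - 1)^2"
proof -
  have scaled: "\<bar>(r - 1)^2 * q\<bar> \<le> (r - 1)^2" if "\<bar>q\<bar> \<le> 1" for q
    using that by (simp add: abs_mult mult_left_le)
  consider "r = 1" | "r = 2" | "1 < r" "r < 2" "x \<le> 2 - r" | "1 < r" "r < 2" "2 - r < x" "x \<le> r"
     | "1 < r" "r < 2" "r < x" using r by force
  then show ?thesis
  proof cases
    case 1
    then show ?thesis by (simp add: mean_displacement_def Tmap_def)
  next
    case 2
    then show ?thesis using x by (auto simp: mean_displacement_def Tmap_def abs_le_iff field_simps)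
  next
    case 3
    have "2 - r \<le> r * (2 - r)" using 3 mult_right_mono[of 1 r "2 - r"] by simp
    then have "x \<le> r * (2 - r)" using 3 by linarith
    then have "\<bar>x / (r * (2 - r))\<bar> \<le> 1" using 3 x by simp
    moreover have "mean_displacement r x = (r - 1)^2 * (x / (r * (2 - r)))"
      using 3 by (auto simp: mean_displacement_def Tmap_def field_simps power2_eq_square)
    ultimately show ?thesis using scaled by metis
  next
    case 4
    have "r - 1 \<le> r * (r - 1)" using 4 mult_right_mono[of 1 r "r - 1"] by simp
    moreover have "\<bar>1 - x\<bar> \<le> r - 1" using 4 by (auto simp: abs_le_iff)
    ultimately have "\<bar>1 - x\<bar> \<le> r * (r - 1)" by linarith
    then have "\<bar>(1 - x) / (r * (r - 1))\<bar> \<le> 1" using 4 by (simp add: abs_divide)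
    moreover have "mean_displacement r x = (r - 1)^2 * ((1 - x) / (r * (r - 1)))"
      using 4 by (auto simp: mean_displacement_def Tmap_def field_simps power2_eq_square)
    ultimately show ?thesis using scaled by metis
  next
    case 5
    have "2 - r \<le> r * (2 - r)" using 5 mult_right_mono[of 1 r "2 - r"] by simp
    then have "2 - x \<le> r * (2 - r)" using 5 by linarith
    then have "\<bar>- (2 - x) / (r * (2 - r))\<bar> \<le> 1" using 5 x by simp
    moreover have "mean_displacement r x = (r - 1)^2 * (- (2 - x) / (r * (2 - r)))"
      using 5 by (auto simp: mean_displacement_def Tmap_def field_simps power2_eq_square)
    ultimately show ?thesis using scaled by metis
  qed
qed

lemma abs_mean_displacement_le:
  assumes "r \<in> {0..2}" "x \<in> {0..2}"
  shows "\<bar>mean_displacement r x\<bar> \<le> (r - 1)^2"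
proof (cases "1 \<le> r")
  case True
  then show ?thesis using assms abs_mean_displacement_le_of_ge_1 by auto
next
  case False
  then have "\<bar>mean_displacement (2 - r) x\<bar> \<le> (2 - r - 1)^2"
    using assms by (intro abs_mean_displacement_le_of_ge_1) auto
  then show ?thesis by (simp add: mean_displacement_reflect power2_commute)
qed

theorem lemma2p2:
  shows "(\<forall>r\<in>{0..2::real}.
            rho_meas r = distr (restrict_space lborel {0..2::real}) lborel (Tmap r))
       \<and> (\<exists>C::real. \<forall>r\<in>{0..2::real}.
            (\<integral>x\<in>{0..2::real}. (Tmap r x - x)^2 \<partial>lborel) \<le> C * (r - 1)^2
          \<and> (\<integral>x\<in>{0..2::real}. ((1/2) * (Tmap r x - x) + (1/2) * (Tmap (2 - r) x - x))^2 \<partial>lborel)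
               \<le> C * (r - 1)^4)"
proof (intro conjI ballI exI[of _ 2])
  fix r :: real
  assume r: "r \<in> {0..2}"
  show "rho_meas r = distr (restrict_space lborel {0..2}) lborel (Tmap r)"
    using r by (rule rho_meas_eq_distr_Tmap)
  have "(Tmap r x - x)^2 \<le> (r - 1)^2" if "x \<in> {0..2}" for x
    using abs_Tmap_minus_le[OF r that] by (simp add: abs_le_square_iff)
  then show "(\<integral>x\<in>{0..2}. (Tmap r x - x)^2 \<partial>lborel) \<le> 2 * (r - 1)^2"
    using set_integral_Icc_le_const[where a = 0 and b = 2] by simp
  have "(mean_displacement r x)^2 \<le> (r - 1)^4" if "x \<in> {0..2}" for x
    using abs_mean_displacement_le[OF r that] abs_le_square_iff[of _ "(r - 1)^2"] by simp
  then show "(\<integral>x\<in>{0..2}. ((1/2) * (Tmap r x - x) + (1/2) * (Tmap (2 - r) x - x))^2 \<partial>lborel)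
               \<le> 2 * (r - 1)^4"
    using set_integral_Icc_le_const[where a = 0 and b = 2] by (simp add: mean_displacement_def)
qed

end
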